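(* Let $T$ be a linear transformation of a finite-dimensional real vector space $W$, and assume $W$ splits as a direct sum of (real) eigenspaces of $T$ with eigenvalues $\neq\pm1$. Let $W^+\subseteq W$ be a subspace having zero intersection with the contracting subspace of $W$ determined by $T$, and fix a norm $\|\cdot\|$ on $W$. Then there is a constant $c<1$ depending only on $T$, and a constant $A$ depending only on $T$, $W^+$ and $\|\cdot\|$, such that for all $w^+\in W^+$ and all integers $0\leq j\leq k$, $$\|T^jw^+\|\leq A\,c^{k-j}\|T^kw^+\|.$$
   Context: The contracting subspace of $W$ determined by $T$ is the sum of the eigenspaces of $T$ whose eigenvalues have absolute value $<1$. *)

theory Defs
  imports "HOL-Analysis.Analysis"
begin

definition eigenspace :: "('a::real_vector \<Rightarrow> 'a) \<Rightarrow> real \<Rightarrow> 'a set" where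
  "eigenspace T l = {x. T x = l *\<^sub>R x}"

definition contracting_subspace :: "('a::real_vector \<Rightarrow> 'a) \<Rightarrow> 'a set" where
  "contracting_subspace T = span (\<Union>l\<in>{l. \<bar>l\<bar> < 1}. eigenspace T l)"

definition is_norm :: "('a::real_vector \<Rightarrow> real) \<Rightarrow> bool" where
  "is_norm N \<longleftrightarrow> (\<forall>x y. N (x + y) \<le> N x + N y) \<and> (\<forall>a x. N (a *\<^sub>R x) = \<bar>a\<bar> * N x)
      \<and> (\<forall>x. N x = 0 \<longleftrightarrow> x = 0)"

end

theory Submission
  imports Defs
begin

text \<open>In an eigenbasis of \<open>T\<close>, the power \<open>T\<^sup>j\<close> multiplies the coordinate at an eigenvector
  \<open>b\<close> by \<open>\<lambda>\<^sub>b\<^sup>j\<close>. For the \<open>\<ell>\<^sup>1\<close>-norm of the coordinates, the expanding coordinates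
  (\<open>\<bar>\<lambda>\<^sub>b\<bar> > 1\<close>) therefore satisfy the estimate with \<open>c\<close> the largest \<open>1/\<bar>\<lambda>\<^sub>b\<bar>\<close>,
  while the contracting ones never grow. As \<open>W\<^sup>+\<close> meets the contracting subspace trivially,
  the expanding coordinates restrict to a norm on \<open>W\<^sup>+\<close>; by compactness of its unit sphere
  they dominate the contracting coordinates there, so the expanding part of \<open>T\<^sup>k w\<close> absorbs
  the contracting part of \<open>T\<^sup>j w\<close>. Equivalence of norms in finite dimension then passes
  the estimate to an arbitrary norm.\<close>

lemma is_norm_scale: "is_norm N \<Longrightarrow> N (a *\<^sub>R x) = \<bar>a\<bar> * N x"
  unfolding is_norm_def by blast

lemma is_norm_triangle: "is_norm N \<Longrightarrow> N (x + y) \<le> N x + N y"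
  unfolding is_norm_def by blast

lemma is_norm_nonneg:
  assumes "is_norm N"
  shows "0 \<le> N x"
proof -
  have "N 0 \<le> N x + N (- x)"
    using is_norm_triangle[OF assms, of x "- x"] by simp
  moreover have "N (- x) = N x"
    using is_norm_scale[OF assms, of "- 1" x] by simp
  moreover have "N 0 = 0"
    using assms unfolding is_norm_def by blast
  ultimately show ?thesis by simp
qed

lemma is_norm_convex_on:
  assumes "is_norm N"
  shows "convex_on UNIV N"
proof (rule convex_onI)
  fix t :: real and x y
  assume "0 < t" "t < 1"
  then show "N ((1 - t) *\<^sub>R x + t *\<^sub>R y) \<le> (1 - t) * N x + t * N y"
    using is_norm_triangle[OF assms] is_norm_scale[OF assms] by (smt (verit))
qed simp

lemma is_norm_continuous_on:
  fixes N :: "'a::euclidean_space \<Rightarrow> real"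
  shows "is_norm N \<Longrightarrow> continuous_on UNIV N"
  by (simp add: convex_on_continuous is_norm_convex_on)

lemma abs_homogeneous_le_on_subspace:
  fixes f g :: "'a::euclidean_space \<Rightarrow> real"
  assumes V: "subspace V"
    and cont: "continuous_on UNIV f" "continuous_on UNIV g"
    and homogeneous: "\<And>r x. f (r *\<^sub>R x) = \<bar>r\<bar> * f x" "\<And>r x. g (r *\<^sub>R x) = \<bar>r\<bar> * g x"
    and pos: "\<And>x. x \<in> V \<Longrightarrow> x \<noteq> 0 \<Longrightarrow> 0 < g x"
  shows "\<exists>K\<ge>0. \<forall>x\<in>V. f x \<le> K * g x"
proof -
  define S where "S = V \<inter> sphere 0 1"
  have "compact S"
    unfolding S_def using closed_subspace[OF V] by (simp add: closed_Int_compact)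
  have f0: "f 0 = 0" and g0: "g 0 = 0"
    using homogeneous[of 0 0] by simp_all
  have normalize: "x = norm x *\<^sub>R ((1 / norm x) *\<^sub>R x)" "(1 / norm x) *\<^sub>R x \<in> S"
    if "x \<in> V" "x \<noteq> 0" for x
    using that V by (simp_all add: S_def subspace_scale)
  show ?thesis
  proof (cases "S = {}")
    case True
    then have "V \<subseteq> {0}" using normalize by blast
    then show ?thesis using f0 by (intro exI[of _ 0]) auto
  next
    case False
    obtain u where u: "u \<in> S" "\<And>y. y \<in> S \<Longrightarrow> g u \<le> g y"
      using continuous_attains_inf[OF \<open>compact S\<close> False continuous_on_subset[OF cont(2)]] by auto
    obtain v where v: "v \<in> S" "\<And>y. y \<in> S \<Longrightarrow> f y \<le> f v"
      using continuous_attains_sup[OF \<open>compact S\<close> False continuous_on_subset[OF cont(1)]] by auto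
    have "0 < g u" using pos u(1) by (force simp: S_def)
    have "f x \<le> \<bar>f v\<bar> / g u * g x" if "x \<in> V" for x
    proof (cases "x = 0")
      case True
      then show ?thesis using f0 g0 by simp
    next
      case False
      define y where "y = (1 / norm x) *\<^sub>R x"
      have "y \<in> S" and f_x: "f x = norm x * f y" and g_x: "g x = norm x * g y"
        using normalize[OF that False] homogeneous[of "norm x" y] by (simp_all add: y_def)
      have "f x \<le> norm x * \<bar>f v\<bar>"
        unfolding f_x using v(2)[OF \<open>y \<in> S\<close>] by (intro mult_left_mono) auto
      also have "\<dots> \<le> \<bar>f v\<bar> / g u * (norm x * g y)"
        using u(2)[OF \<open>y \<in> S\<close>] \<open>0 < g u\<close> by (simp add: field_simps mult_left_mono mult_right_mono)
      finally show ?thesis unfolding g_x .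
    qed
    moreover have "0 \<le> \<bar>f v\<bar> / g u"
      using \<open>0 < g u\<close> by simp
    ultimately show ?thesis by blast
  qed
qed

lemma is_norm_le_mult:
  fixes N M :: "'a::euclidean_space \<Rightarrow> real"
  assumes "is_norm N" "is_norm M"
  shows "\<exists>a\<ge>0. \<forall>x. N x \<le> a * M x"
proof -
  have "0 < M x" if "x \<noteq> 0" for x
    using is_norm_nonneg[OF assms(2), of x] assms(2) that unfolding is_norm_def by force
  then show ?thesis
    using abs_homogeneous_le_on_subspace[OF subspace_UNIV is_norm_continuous_on[OF assms(1)]
        is_norm_continuous_on[OF assms(2)] is_norm_scale[OF assms(1)] is_norm_scale[OF assms(2)]]
    by blast
qed

lemma uniform_contraction_rate:
  fixes l :: "'i \<Rightarrow> real"
  assumes "finite I" "\<And>i. i \<in> I \<Longrightarrow> 1 < l i"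
  shows "\<exists>c. 0 < c \<and> c < 1 \<and> (\<forall>i\<in>I. 1 \<le> c * l i)"
proof -
  define c where "c = Max (insert (1 / 2) ((\<lambda>i. inverse (l i)) ` I))"
  have "1 / 2 \<le> c"
    unfolding c_def using assms(1) by (intro Max_ge) simp_all
  moreover have "\<forall>i\<in>I. inverse (l i) \<le> c"
    unfolding c_def using assms(1) by (auto intro: Max_ge)
  moreover have "c < 1"
    using assms by (simp add: c_def inverse_less_1_iff)
  moreover have "1 \<le> c * l i" if "i \<in> I" "inverse (l i) \<le> c" for i
    using that assms(2)[OF that(1)] by (simp add: field_simps)
  ultimately show ?thesis by (intro exI[of _ c]) auto
qed

lemma expanding_dominated_sum_le:
  fixes l x :: "'b \<Rightarrow> real"
  assumes "0 \<le> c" "c \<le> 1" "0 \<le> K" "j \<le> k"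
    and nonneg: "\<And>b. 0 \<le> l b" "\<And>b. 0 \<le> x b"
    and expanding: "\<And>b. b \<in> E \<Longrightarrow> 1 \<le> c * l b"
    and contracting: "\<And>b. b \<in> C \<Longrightarrow> l b \<le> 1"
    and dominated: "(\<Sum>b\<in>C. x b) \<le> K * (\<Sum>b\<in>E. x b)"
  shows "(\<Sum>b\<in>E. l b ^ j * x b) + (\<Sum>b\<in>C. l b ^ j * x b)
      \<le> (1 + K) * c ^ (k - j) * ((\<Sum>b\<in>E. l b ^ k * x b) + (\<Sum>b\<in>C. l b ^ k * x b))"
proof -
  define e where "e = (\<Sum>b\<in>E. l b ^ k * x b)"
  have growth: "l b ^ i \<le> c ^ (k - j) * l b ^ k" if "b \<in> E" "i \<le> j" for b i
  proof -
    have "1 \<le> l b"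
      using expanding[OF \<open>b \<in> E\<close>] mult_left_le_one_le[OF nonneg(1)[of b] \<open>0 \<le> c\<close> \<open>c \<le> 1\<close>]
      by linarith
    have "l b ^ i * 1 \<le> l b ^ j * (c * l b) ^ (k - j)"
      using expanding[OF \<open>b \<in> E\<close>] \<open>1 \<le> l b\<close> \<open>i \<le> j\<close>
      by (intro mult_mono power_increasing one_le_power) auto
    also have "\<dots> = c ^ (k - j) * l b ^ k"
      using \<open>j \<le> k\<close> by (simp add: power_mult_distrib power_add[symmetric])
    finally show ?thesis by simp
  qed
  have expanding_part: "(\<Sum>b\<in>E. l b ^ i * x b) \<le> c ^ (k - j) * e" if "i \<le> j" for i
    unfolding e_def sum_distrib_left mult.assoc[symmetric]
    using growth that nonneg(2) by (intro sum_mono mult_right_mono) auto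
  have "(\<Sum>b\<in>C. l b ^ j * x b) \<le> (\<Sum>b\<in>C. x b)"
    using contracting nonneg by (intro sum_mono mult_left_le_one_le power_le_one) auto
  also have "\<dots> \<le> K * (c ^ (k - j) * e)"
    using dominated mult_left_mono[OF expanding_part[of 0] \<open>0 \<le> K\<close>] by simp
  finally have contracting_part: "(\<Sum>b\<in>C. l b ^ j * x b) \<le> K * (c ^ (k - j) * e)" .
  have "0 \<le> (1 + K) * c ^ (k - j) * (\<Sum>b\<in>C. l b ^ k * x b)"
    using nonneg \<open>0 \<le> c\<close> \<open>0 \<le> K\<close> by (intro mult_nonneg_nonneg sum_nonneg) auto
  moreover have "(1 + K) * c ^ (k - j) * (e + (\<Sum>b\<in>C. l b ^ k * x b))
      = c ^ (k - j) * e + K * (c ^ (k - j) * e) + (1 + K) * c ^ (k - j) * (\<Sum>b\<in>C. l b ^ k * x b)"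
    by (simp add: algebra_simps)
  ultimately show ?thesis
    using expanding_part[of j] contracting_part unfolding e_def by linarith
qed

lemma eigenbasis_exists:
  assumes "span (\<Union>l\<in>L. eigenspace T l) = UNIV"
  obtains B ev where "independent B" "span B = UNIV" "\<And>b. b \<in> B \<Longrightarrow> ev b \<in> L \<and> T b = ev b *\<^sub>R b"
proof -
  obtain B where B: "B \<subseteq> (\<Union>l\<in>L. eigenspace T l)" "independent B" "span B = UNIV"
    using basis_exists[of "\<Union>l\<in>L. eigenspace T l"] assms
    by (metis span_eq span_span subset_UNIV)
  then have "\<forall>b\<in>B. \<exists>l. l \<in> L \<and> T b = l *\<^sub>R b"
    by (auto simp: eigenspace_def)
  then obtain ev where "\<forall>b\<in>B. ev b \<in> L \<and> T b = ev b *\<^sub>R b"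
    by metis
  with B show ?thesis using that by blast
qed

definition expands_geometrically :: "('a \<Rightarrow> real) \<Rightarrow> ('a \<Rightarrow> 'a) \<Rightarrow> real \<Rightarrow> real \<Rightarrow> 'a set \<Rightarrow> bool"
  where "expands_geometrically N T c A W \<longleftrightarrow>
    (\<forall>w\<in>W. \<forall>j k. j \<le> k \<longrightarrow> N ((T ^^ j) w) \<le> A * c ^ (k - j) * N ((T ^^ k) w))"

lemma expands_geometrically_norm_change:
  assumes "expands_geometrically M T c A W"
    and "\<forall>x. N x \<le> a * M x" "\<forall>x. M x \<le> a' * N x"
    and "0 \<le> a" "0 \<le> c" "0 \<le> A"
  shows "expands_geometrically N T c (a * A * a') W"
  unfolding expands_geometrically_def
proof (intro ballI allI impI)
  fix w j k
  assume "w \<in> W" "j \<le> (k::nat)"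
  have "N ((T ^^ j) w) \<le> a * M ((T ^^ j) w)"
    using assms(2) by blast
  also have "\<dots> \<le> a * (A * c ^ (k - j) * M ((T ^^ k) w))"
    using assms(1,4) \<open>w \<in> W\<close> \<open>j \<le> k\<close>
    by (intro mult_left_mono) (auto simp: expands_geometrically_def)
  also have "\<dots> \<le> a * (A * c ^ (k - j) * (a' * N ((T ^^ k) w)))"
    using assms(3-6) by (intro mult_left_mono) auto
  finally show "N ((T ^^ j) w) \<le> a * A * a' * c ^ (k - j) * N ((T ^^ k) w)"
    by (simp add: ac_simps)
qed

locale eigenbasis =
  fixes T :: "'a::euclidean_space \<Rightarrow> 'a" and B :: "'a set" and ev :: "'a \<Rightarrow> real"
  assumes linear: "linear T"
    and independent: "independent B"
    and spanning: "span B = UNIV"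
    and eigenvector: "\<And>b. b \<in> B \<Longrightarrow> T b = ev b *\<^sub>R b"
begin

lemma finite_basis: "finite B"
  using independent_bound[OF independent] by blast

lemma sum_representation: "(\<Sum>b\<in>B. representation B x b *\<^sub>R b) = x"
  using sum_representation_eq[OF independent _ finite_basis] spanning by simp

lemma representation_apply: "representation B (T x) b = ev b * representation B x b"
proof -
  have "T x = T (\<Sum>b'\<in>B. representation B x b' *\<^sub>R b')"
    by (simp add: sum_representation)
  also have "\<dots> = (\<Sum>b'\<in>B. (ev b' * representation B x b') *\<^sub>R b')"
    using linear eigenvector by (simp add: linear_sum linear_scale mult.commute)
  also have "representation B \<dots> b = (\<Sum>b'\<in>B. (ev b' * representation B x b') * representation B b' b)"
    using independent spanning by (simp add: representation_sum representation_scale)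
  also have "\<dots> = ev b * representation B x b"
    using finite_basis representation_ne_zero[of B x b]
    by (cases "b \<in> B") (auto simp: representation_basis[OF independent] if_distrib cong: if_cong)
  finally show ?thesis .
qed

lemma representation_funpow: "representation B ((T ^^ n) x) b = ev b ^ n * representation B x b"
  by (induction n) (simp_all add: representation_apply)

definition coord_l1 :: "'a set \<Rightarrow> 'a \<Rightarrow> real" where
  "coord_l1 D x = (\<Sum>b\<in>D. \<bar>representation B x b\<bar>)"

lemma coord_l1_scale: "coord_l1 D (r *\<^sub>R x) = \<bar>r\<bar> * coord_l1 D x"
  using independent spanning
  by (simp add: coord_l1_def representation_scale abs_mult sum_distrib_left)

lemma continuous_on_coord_l1: "continuous_on UNIV (coord_l1 D)"
  unfolding coord_l1_def
  by (intro continuous_intros linear_continuous_on bounded_linear_representation independent spanning)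

lemma coord_l1_funpow: "coord_l1 D ((T ^^ n) x) = (\<Sum>b\<in>D. \<bar>ev b\<bar> ^ n * \<bar>representation B x b\<bar>)"
  by (simp add: coord_l1_def representation_funpow abs_mult power_abs)

lemma coord_l1_eq_0_iff:
  assumes "D \<subseteq> B"
  shows "coord_l1 D x = 0 \<longleftrightarrow> (\<forall>b\<in>D. representation B x b = 0)"
  using finite_subset[OF assms finite_basis] by (simp add: coord_l1_def sum_nonneg_eq_0_iff)

lemma is_norm_coord_l1: "is_norm (coord_l1 B)"
  unfolding is_norm_def
proof (intro conjI allI)
  fix x y
  show "coord_l1 B (x + y) \<le> coord_l1 B x + coord_l1 B y"
    using independent spanning
    by (simp add: coord_l1_def representation_add sum.distrib[symmetric] sum_mono abs_triangle_ineq)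
  show "coord_l1 B x = 0 \<longleftrightarrow> x = 0"
    using sum_representation[of x] by (auto simp: coord_l1_eq_0_iff representation_zero)
qed (rule coord_l1_scale)

lemma in_contracting_subspace:
  assumes "\<And>b. b \<in> B \<Longrightarrow> 1 \<le> \<bar>ev b\<bar> \<Longrightarrow> representation B x b = 0"
  shows "x \<in> contracting_subspace T"
proof -
  have "representation B x b *\<^sub>R b \<in> contracting_subspace T" if "b \<in> B" for b
  proof (cases "1 \<le> \<bar>ev b\<bar>")
    case True
    then show ?thesis
      using assms[OF that] by (simp add: contracting_subspace_def span_zero)
  next
    case False
    then have "\<bar>ev b\<bar> < 1" by simp
    moreover have "b \<in> eigenspace T (ev b)"
      using eigenvector[OF that] by (simp add: eigenspace_def)
    ultimately have "b \<in> (\<Union>l\<in>{l. \<bar>l\<bar> < 1}. eigenspace T l)"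
      by auto
    then show ?thesis
      unfolding contracting_subspace_def by (intro span_scale span_base)
  qed
  then have "(\<Sum>b\<in>B. representation B x b *\<^sub>R b) \<in> contracting_subspace T"
    unfolding contracting_subspace_def by (rule span_sum)
  then show ?thesis
    by (simp add: sum_representation)
qed

lemma coord_l1_growth:
  assumes nonunit: "\<And>b. b \<in> B \<Longrightarrow> \<bar>ev b\<bar> \<noteq> 1"
    and "0 \<le> c" "c \<le> 1"
    and rate: "\<And>b. b \<in> B \<Longrightarrow> 1 < \<bar>ev b\<bar> \<Longrightarrow> 1 \<le> c * \<bar>ev b\<bar>"
    and W: "subspace W" "W \<inter> contracting_subspace T = {0}"
  shows "\<exists>A\<ge>0. expands_geometrically (coord_l1 B) T c A W"
proof -
  define E where "E = {b\<in>B. 1 < \<bar>ev b\<bar>}"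
  define C where "C = {b\<in>B. \<bar>ev b\<bar> < 1}"
  have "B = E \<union> C" "E \<inter> C = {}"
    using nonunit by (force simp: E_def C_def)+
  then have split: "coord_l1 B x = coord_l1 E x + coord_l1 C x" for x
    using finite_basis unfolding coord_l1_def by (metis finite_Un sum.union_disjoint)
  have "0 < coord_l1 E x" if "x \<in> W" "x \<noteq> 0" for x
  proof (rule ccontr)
    assume "\<not> 0 < coord_l1 E x"
    then have "coord_l1 E x = 0"
      unfolding coord_l1_def by (simp add: sum_nonneg order_less_le)
    then have "\<forall>b\<in>E. representation B x b = 0"
      using coord_l1_eq_0_iff[of E] by (auto simp: E_def)
    then have "x \<in> contracting_subspace T"
      using nonunit by (intro in_contracting_subspace) (auto simp: E_def order_le_less)
    with that W(2) show False by blast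
  qed
  then obtain K where "0 \<le> K" and dominated: "\<forall>x\<in>W. coord_l1 C x \<le> K * coord_l1 E x"
    using abs_homogeneous_le_on_subspace[OF W(1) continuous_on_coord_l1 continuous_on_coord_l1
        coord_l1_scale coord_l1_scale] by blast
  have "coord_l1 B ((T ^^ j) w) \<le> (1 + K) * c ^ (k - j) * coord_l1 B ((T ^^ k) w)"
    if "w \<in> W" "j \<le> k" for w j k
  proof -
    have "coord_l1 E ((T ^^ j) w) + coord_l1 C ((T ^^ j) w)
        \<le> (1 + K) * c ^ (k - j) * (coord_l1 E ((T ^^ k) w) + coord_l1 C ((T ^^ k) w))"
      unfolding coord_l1_funpow
      using dominated \<open>w \<in> W\<close> rate
      by (intro expanding_dominated_sum_le[OF \<open>0 \<le> c\<close> \<open>c \<le> 1\<close> \<open>0 \<le> K\<close> \<open>j \<le> k\<close>])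
        (auto simp: coord_l1_def E_def C_def)
    then show ?thesis
      by (simp only: split)
  qed
  with \<open>0 \<le> K\<close> show ?thesis
    unfolding expands_geometrically_def by (intro exI[of _ "1 + K"]) auto
qed


lemma norm_expands_geometrically:
  assumes nonunit: "\<And>b. b \<in> B \<Longrightarrow> \<bar>ev b\<bar> \<noteq> 1"
    and "0 \<le> c" "c \<le> 1"
    and rate: "\<And>b. b \<in> B \<Longrightarrow> 1 < \<bar>ev b\<bar> \<Longrightarrow> 1 \<le> c * \<bar>ev b\<bar>"
    and W: "subspace W" "W \<inter> contracting_subspace T = {0}"
    and "is_norm N"
  shows "\<exists>A. expands_geometrically N T c A W"
proof -
  obtain A where "0 \<le> A" and coord: "expands_geometrically (coord_l1 B) T c A W"
    using coord_l1_growth[OF nonunit \<open>0 \<le> c\<close> \<open>c \<le> 1\<close> rate W] by blast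
  obtain a a' where "0 \<le> a" and equiv: "\<forall>x. N x \<le> a * coord_l1 B x" "\<forall>x. coord_l1 B x \<le> a' * N x"
    using is_norm_le_mult[OF \<open>is_norm N\<close> is_norm_coord_l1]
      is_norm_le_mult[OF is_norm_coord_l1 \<open>is_norm N\<close>] by blast
  have "expands_geometrically N T c (a * A * a') W"
    by (rule expands_geometrically_norm_change[OF coord equiv \<open>0 \<le> a\<close> \<open>0 \<le> c\<close> \<open>0 \<le> A\<close>])
  then show ?thesis ..
qed

end

theorem lemma8p3:
  fixes T :: "'a::euclidean_space \<Rightarrow> 'a"
  assumes "linear T"
    and "span (\<Union>l\<in>{l. l \<noteq> 1 \<and> l \<noteq> -1}. eigenspace T l) = UNIV"
  shows "\<exists>c::real. 0 < c \<and> c < 1 \<and>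
           (\<forall>(Wp::'a set) (N::'a \<Rightarrow> real).
              subspace Wp \<and> Wp \<inter> contracting_subspace T = {0} \<and> is_norm N \<longrightarrow>
              (\<exists>A::real. \<forall>w\<in>Wp. \<forall>j k::nat. j \<le> k \<longrightarrow>
                  N ((T ^^ j) w) \<le> A * c ^ (k - j) * N ((T ^^ k) w)))"
proof -
  obtain B ev where basis: "independent B" "span B = UNIV"
    and eigen: "\<And>b. b \<in> B \<Longrightarrow> ev b \<in> {l. l \<noteq> 1 \<and> l \<noteq> -1} \<and> T b = ev b *\<^sub>R b"
    using eigenbasis_exists[OF assms(2)] by blast
  interpret eigenbasis T B ev
    by (rule eigenbasis.intro) (use assms(1) basis eigen in auto)
  have nonunit: "\<bar>ev b\<bar> \<noteq> 1" if "b \<in> B" for b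
    using eigen[OF that] by (auto simp: abs_if)
  have "\<exists>c. 0 < c \<and> c < 1 \<and> (\<forall>b\<in>{b\<in>B. 1 < \<bar>ev b\<bar>}. 1 \<le> c * \<bar>ev b\<bar>)"
    using finite_basis by (intro uniform_contraction_rate) simp_all
  then obtain c where "0 < c" "c < 1" and rate: "\<And>b. b \<in> B \<Longrightarrow> 1 < \<bar>ev b\<bar> \<Longrightarrow> 1 \<le> c * \<bar>ev b\<bar>"
    by blast
  have "\<exists>A. expands_geometrically N T c A W"
    if "subspace W" "W \<inter> contracting_subspace T = {0}" "is_norm N" for W N
    using norm_expands_geometrically[OF nonunit _ _ rate that] \<open>0 < c\<close> \<open>c < 1\<close> by simp
  then show ?thesis
    using \<open>0 < c\<close> \<open>c < 1\<close> unfolding expands_geometrically_def by (intro exI[of _ c]) simp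
qed

end
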